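(* For every $k\in\mathbb{N}$, the limit $\tau_k^*:=\lim_{n\to\infty}\tau_{n,k}$ exists and $$\tau_k^*=\Gamma(\nu+1)\Big(\frac{j_{\nu+1,1}}{2}\Big)^{-\nu}\,|J_\nu(j_{\nu+1,1})|,\qquad \nu=k-\tfrac12,$$ where $J_\nu$ is the Bessel function of the first kind of order $\nu$ and $j_{\nu+1,1}$ is the first positive zero of $J_{\nu+1}$.
   Context: $T_n$ denotes the Chebyshev polynomial of the first kind of degree $n$, $T_n(\cos\theta)=\cos n\theta$. For integers $n\ge k+2$, $k\ge 1$, let $\omega_{n,k}$ be the rightmost (largest) zero of $T_n^{(k+1)}$ and define $\tau_{n,k}:=|T_n^{(k)}(\omega_{n,k})|/T_n^{(k)}(1)$. *)

theory Defs
  imports "HOL-Analysis.Analysis" "HOL-Computational_Algebra.Polynomial"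
begin

fun cheb :: "nat \<Rightarrow> real poly" where
  "cheb 0 = 1"
| "cheb (Suc 0) = [:0, 1:]"
| "cheb (Suc (Suc n)) = [:0, 2:] * cheb (Suc n) - cheb n"

definition cheb_deriv :: "nat \<Rightarrow> nat \<Rightarrow> real poly" where
  "cheb_deriv n k = (pderiv ^^ k) (cheb n)"

definition omega :: "nat \<Rightarrow> nat \<Rightarrow> real" where
  "omega n k = Max {x. poly (cheb_deriv n (k + 1)) x = 0}"

definition tau :: "nat \<Rightarrow> nat \<Rightarrow> real" where
  "tau n k = \<bar>poly (cheb_deriv n k) (omega n k)\<bar> / poly (cheb_deriv n k) 1"

text \<open>Bessel function of the first kind of real order nu, for x > 0, by its power series.\<close>
definition besselJ :: "real \<Rightarrow> real \<Rightarrow> real" where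
  "besselJ \<nu> x = (\<Sum>m. (-1) ^ m / (fact m * Gamma (real m + \<nu> + 1)) * (x / 2) powr (2 * real m + \<nu>))"

definition first_pos_zero :: "real \<Rightarrow> real" where
  "first_pos_zero \<nu> = (THE j. 0 < j \<and> besselJ \<nu> j = 0 \<and> (\<forall>y. 0 < y \<and> y < j \<longrightarrow> besselJ \<nu> y \<noteq> 0))"

end

(* Put x = cos (z/n). The Chebyshev equation (1 - x^2) T'' - x T' + n^2 T = 0, differentiated m times at
   x = 1, gives T_n^(k+m)(1) = prod_{i<k+m} (n^2 - i^2)/(2i+1), so the Taylor expansion of T_n^(k) at 1 shows
   that T_n^(k)(cos (z/n)) / T_n^(k)(1) tends, uniformly for z in compact sets, to
   Lambda_k(z) = sum_m (-z^2/2)^m / (m! (2k+1)(2k+3)...(2k+2m-1)) = Gamma(k+1/2) (z/2)^(1/2-k) J_(k-1/2)(z).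
   The rescaled zeros n arccos omega_(n,k) of T_n^(k+1) are bounded (Rolle's theorem between the largest zeros
   of T_n) and converge to the first positive zero j of Lambda_(k+1), because Lambda_(k+1) changes sign at j:
   since Lambda_k' = -z Lambda_(k+1) / (2k+1), a zero without sign change would also be a zero of
   Lambda_(k+2), and the three-term recurrence would then make it a zero of every Lambda_K, although
   Lambda_K -> 1 as K -> infinity. Hence tau_(n,k) -> |Lambda_k(j)|. *)

theory Submission
  imports Defs
begin

lemma poly_cheb_cos: "poly (cheb n) (cos t) = cos (real n * t)"
proof (induction n rule: cheb.induct)
  case (3 n)
  have "cos (real (Suc (Suc n)) * t) = 2 * cos t * cos (real (Suc n) * t) - cos (real n * t)"
    using cos_add[of "real (Suc n) * t" t] cos_diff[of "real (Suc n) * t" t]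
    by (simp add: algebra_simps)
  then show ?case using 3 by simp
qed simp_all

lemma degree_cheb_le: "degree (cheb n) \<le> n"
proof (induction n rule: cheb.induct)
  case (3 n)
  have "degree ([:0, 2:] * cheb (Suc n)) \<le> Suc (Suc n)"
    using degree_mult_le[of "[:0, 2:]" "cheb (Suc n)"] 3 by simp
  then show ?case using 3 by (simp add: degree_diff_le)
qed auto

lemma cheb_deriv_0 [simp]: "cheb_deriv n 0 = cheb n"
  by (simp add: cheb_deriv_def)

lemma cheb_deriv_Suc: "cheb_deriv n (Suc k) = pderiv (cheb_deriv n k)"
  by (simp add: cheb_deriv_def)

lemma cheb_deriv_eq_0:
  assumes "n < j"
  shows "cheb_deriv n j = 0"
proof -
  from assms obtain i where j: "j = Suc i" and "n \<le> i" by (cases j) auto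
  then have "degree (cheb_deriv n i) = 0"
    using degree_cheb_le[of n] by (simp add: cheb_deriv_def degree_higher_pderiv)
  then show ?thesis by (simp add: j cheb_deriv_Suc pderiv_eq_0_iff)
qed

lemma has_real_derivative_cheb_deriv [derivative_intros]:
  "((\<lambda>x. poly (cheb_deriv n j) x) has_real_derivative poly (cheb_deriv n (Suc j)) x) (at x)"
  unfolding cheb_deriv_Suc by (rule poly_DERIV)

lemma cheb_ode_cos:
  "(sin t)^2 * poly (pderiv (pderiv (cheb n))) (cos t) - cos t * poly (pderiv (cheb n)) (cos t)
     + (real n)^2 * poly (cheb n) (cos t) = 0"
proof -
  let ?T = "cheb n"
  have first: "poly (pderiv ?T) (cos s) * sin s = real n * sin (real n * s)" for s
  proof -
    have "((\<lambda>s. poly ?T (cos s)) has_real_derivative poly (pderiv ?T) (cos s) * (- sin s)) (at s)"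
      by (rule DERIV_chain2[OF poly_DERIV DERIV_cos])
    moreover have "((\<lambda>s. poly ?T (cos s)) has_real_derivative - sin (real n * s) * real n) (at s)"
      unfolding poly_cheb_cos by (auto intro!: derivative_eq_intros)
    ultimately have "poly (pderiv ?T) (cos s) * (- sin s) = - sin (real n * s) * real n"
      by (rule DERIV_unique)
    then show ?thesis by simp
  qed
  have "((\<lambda>s. poly (pderiv ?T) (cos s) * sin s) has_real_derivative
      poly (pderiv (pderiv ?T)) (cos t) * (- sin t) * sin t + poly (pderiv ?T) (cos t) * cos t) (at t)"
    by (rule DERIV_mult[OF DERIV_chain2[OF poly_DERIV DERIV_cos] DERIV_sin, THEN DERIV_cong]) simp
  moreover have "((\<lambda>s. poly (pderiv ?T) (cos s) * sin s) has_real_derivative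
      real n * (cos (real n * t) * real n)) (at t)"
    unfolding first by (auto intro!: derivative_eq_intros)
  ultimately have "poly (pderiv (pderiv ?T)) (cos t) * (- sin t) * sin t + poly (pderiv ?T) (cos t) * cos t
      = real n * (cos (real n * t) * real n)"
    by (rule DERIV_unique)
  then show ?thesis
    unfolding poly_cheb_cos by (simp add: power2_eq_square algebra_simps)
qed

lemma cheb_ode:
  "(1 - x^2) * poly (cheb_deriv n 2) x - x * poly (cheb_deriv n 1) x
     + (real n)^2 * poly (cheb_deriv n 0) x = 0"
proof -
  define Q where "Q = [:1, 0, -1:] * pderiv (pderiv (cheb n)) - [:0, 1:] * pderiv (cheb n)
    + smult ((real n)^2) (cheb n)"
  have poly_Q: "poly Q y = (1 - y^2) * poly (pderiv (pderiv (cheb n))) y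
      - y * poly (pderiv (cheb n)) y + (real n)^2 * poly (cheb n) y" for y
    by (simp add: Q_def power2_eq_square algebra_simps)
  have "{-1..1} \<subseteq> {y. poly Q y = 0}"
  proof
    fix y :: real assume y: "y \<in> {-1..1}"
    have "cos (arccos y) = y" "(sin (arccos y))^2 = 1 - y^2"
      using y by (simp_all add: cos_arccos sin_arccos abs_square_le_1 abs_le_iff)
    then show "y \<in> {y. poly Q y = 0}"
      using cheb_ode_cos[of "arccos y" n] unfolding poly_Q by simp
  qed
  moreover have "infinite {-1..(1::real)}" by simp
  ultimately have "Q = 0" using poly_roots_finite finite_subset by blast
  then show ?thesis using poly_Q[of x] by (simp add: cheb_deriv_def numeral_2_eq_2)
qed

lemma cheb_deriv_ode:
  "(1 - x^2) * poly (cheb_deriv n (m+2)) x - (2 * real m + 1) * x * poly (cheb_deriv n (m+1)) x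
     + ((real n)^2 - (real m)^2) * poly (cheb_deriv n m) x = 0"
proof (induction m arbitrary: x)
  case 0 then show ?case using cheb_ode[of x n] by (simp add: numeral_2_eq_2)
next
  case (Suc m)
  have "((\<lambda>x. (1 - x^2) * poly (cheb_deriv n (m+2)) x - (2 * real m + 1) * x * poly (cheb_deriv n (m+1)) x
      + ((real n)^2 - (real m)^2) * poly (cheb_deriv n m) x) has_real_derivative
      (1 - x^2) * poly (cheb_deriv n (Suc m+2)) x - (2 * real (Suc m) + 1) * x * poly (cheb_deriv n (Suc m+1)) x
      + ((real n)^2 - (real (Suc m))^2) * poly (cheb_deriv n (Suc m)) x) (at x)"
    by (auto intro!: derivative_eq_intros simp: power2_eq_square algebra_simps)
  moreover have "((\<lambda>x. (1 - x^2) * poly (cheb_deriv n (m+2)) x - (2 * real m + 1) * x * poly (cheb_deriv n (m+1)) x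
      + ((real n)^2 - (real m)^2) * poly (cheb_deriv n m) x) has_real_derivative 0) (at x)"
    unfolding Suc.IH by simp
  ultimately show ?case by (rule DERIV_unique)
qed

definition cheb_deriv_at_one :: "nat \<Rightarrow> nat \<Rightarrow> real" where
  "cheb_deriv_at_one n m = poly (cheb_deriv n m) 1"

lemma cheb_deriv_at_one_eq_prod:
  "cheb_deriv_at_one n m = (\<Prod>i<m. ((real n)^2 - (real i)^2) / (2 * real i + 1))"
proof (induction m)
  case 0
  have "poly (cheb n) (cos 0) = 1" unfolding poly_cheb_cos by simp
  then show ?case by (simp add: cheb_deriv_at_one_def)
next
  case (Suc m)
  have "(2 * real m + 1) * cheb_deriv_at_one n (Suc m) = ((real n)^2 - (real m)^2) * cheb_deriv_at_one n m"
    using cheb_deriv_ode[of 1 n m] unfolding cheb_deriv_at_one_def by (simp add: add.commute)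
  then have "cheb_deriv_at_one n (Suc m) = ((real n)^2 - (real m)^2) / (2 * real m + 1) * cheb_deriv_at_one n m"
    by (simp add: field_simps add_pos_pos)
  then show ?case using Suc by (simp add: mult.commute)
qed

lemma cheb_deriv_at_one_nonneg: "0 \<le> cheb_deriv_at_one n m"
proof (cases "m \<le> n")
  case True
  then show ?thesis unfolding cheb_deriv_at_one_eq_prod
    by (intro prod_nonneg) (auto simp: power_mono)
next
  case False
  then have "n \<in> {..<m}" by simp
  then show ?thesis unfolding cheb_deriv_at_one_eq_prod by (subst prod_zero) auto
qed

lemma cheb_deriv_at_one_pos: "m \<le> n \<Longrightarrow> 0 < cheb_deriv_at_one n m"
  unfolding cheb_deriv_at_one_eq_prod by (intro prod_pos) (auto simp: power_strict_mono)

lemma poly_cheb_deriv_taylor: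
  "poly (cheb_deriv n k) x = (\<Sum>m<n+1. cheb_deriv_at_one n (k+m) / fact m * (x - 1)^m)"
proof -
  define D where "D m h = poly (cheb_deriv n (k+m)) (1 + h)" for m h
  have "\<forall>m h. DERIV (D m) h :> D (Suc m) h"
  proof (intro allI)
    fix m h
    have "((\<lambda>h. poly (cheb_deriv n (k+m)) (1 + h)) has_real_derivative
        poly (cheb_deriv n (Suc (k+m))) (1 + h) * 1) (at h)"
      by (rule DERIV_chain2[OF has_real_derivative_cheb_deriv]) (auto intro!: derivative_eq_intros)
    then show "DERIV (D m) h :> D (Suc m) h" by (simp add: D_def[abs_def])
  qed
  from Maclaurin_all_le[OF refl this, of "x - 1" "n + 1"] obtain t where
    "D 0 (x - 1) = (\<Sum>m<n+1. D m 0 / fact m * (x - 1)^m) + D (n+1) t / fact (n+1) * (x - 1)^(n+1)"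
    by blast
  moreover have "D (n+1) t = 0" by (simp add: D_def cheb_deriv_eq_0)
  ultimately show ?thesis by (simp add: D_def cheb_deriv_at_one_def)
qed

lemma poly_cheb_deriv_pos:
  assumes "k \<le> n" "1 \<le> x"
  shows "0 < poly (cheb_deriv n k) x"
proof -
  have "cheb_deriv_at_one n (k+0) / fact 0 * (x - 1)^0
      \<le> (\<Sum>m<n+1. cheb_deriv_at_one n (k+m) / fact m * (x - 1)^m)"
    by (rule member_le_sum) (use assms cheb_deriv_at_one_nonneg in auto)
  then show ?thesis unfolding poly_cheb_deriv_taylor using cheb_deriv_at_one_pos[OF assms(1)] by simp
qed

lemma poly_higher_pderiv_root_between:
  fixes p :: "real poly"
  assumes "\<forall>i<r. a i < a (Suc i)" "\<forall>i\<le>r. poly p (a i) = 0"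
  shows "\<exists>x. a 0 \<le> x \<and> x \<le> a r \<and> poly ((pderiv ^^ r) p) x = 0"
  using assms
proof (induction r arbitrary: p a)
  case 0 then show ?case by auto
next
  case (Suc r)
  have "\<exists>b. a i < b \<and> b < a (Suc i) \<and> poly (pderiv p) b = 0" if "i \<le> r" for i
  proof -
    have lt: "a i < a (Suc i)" using Suc.prems that by simp
    from poly_MVT[OF lt, of p] obtain b where "a i < b" "b < a (Suc i)"
      "poly p (a (Suc i)) - poly p (a i) = (a (Suc i) - a i) * poly (pderiv p) b" by blast
    moreover have "poly p (a (Suc i)) = 0" "poly p (a i) = 0" using Suc.prems that by auto
    ultimately show ?thesis using lt by auto
  qed
  then obtain b where b: "\<And>i. i \<le> r \<Longrightarrow> a i < b i \<and> b i < a (Suc i) \<and> poly (pderiv p) (b i) = 0"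
    by metis
  have "\<forall>i<r. b i < b (Suc i)"
    using b by (metis Suc_leI less_imp_le less_trans)
  moreover have "\<forall>i\<le>r. poly (pderiv p) (b i) = 0" using b by simp
  ultimately obtain x where "b 0 \<le> x" "x \<le> b r" "poly ((pderiv ^^ r) (pderiv p)) x = 0"
    using Suc.IH by blast
  moreover have "(pderiv ^^ Suc r) p = (pderiv ^^ r) (pderiv p)"
    by (simp add: funpow_Suc_right del: funpow.simps)
  moreover have "a 0 < b 0" "b r < a (Suc r)" using b[of 0] b[of r] by auto
  ultimately show ?case by (intro exI[of _ x]) auto
qed

lemma one_minus_cos_taylor:
  fixes t :: real
  shows "\<bar>(1 - cos t) - t^2/2\<bar> \<le> t^4/24"
proof (cases "t = 0")
  case False
  from Maclaurin_cos_expansion[of t 4] obtain s where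
    s: "cos t = (\<Sum>m<4. cos_coeff m * t ^ m) + cos (s + 1/2 * real 4 * pi) / fact 4 * t ^ 4" by blast
  have "(\<Sum>m<4. cos_coeff m * t ^ m) = 1 - t^2/2"
    by (simp add: numeral_eq_Suc cos_coeff_def) presburger
  moreover have "cos (s + 1/2 * real 4 * pi) = cos s"
    using cos_periodic[of s] by simp
  moreover have "fact 4 = (24::real)" by (simp add: numeral_eq_Suc)
  ultimately have "(1 - cos t) - t^2/2 = - (cos s * t^4 / 24)" using s by simp
  moreover have "\<bar>cos s * t^4\<bar> \<le> t^4" using abs_cos_le_one[of s]
    by (simp add: abs_mult mult_left_le_one_le)
  ultimately show ?thesis by simp
qed simp

lemma abs_power_diff_le:
  fixes x y Q :: real
  assumes "\<bar>x\<bar> \<le> Q" "\<bar>y\<bar> \<le> Q"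
  shows "\<bar>x^m - y^m\<bar> \<le> real m * Q^(m-1) * \<bar>x - y\<bar>"
proof (induction m)
  case (Suc m)
  have "x^Suc m - y^Suc m = x * (x^m - y^m) + y^m * (x - y)" by (simp add: algebra_simps)
  then have "\<bar>x^Suc m - y^Suc m\<bar> \<le> \<bar>x\<bar> * \<bar>x^m - y^m\<bar> + \<bar>y\<bar>^m * \<bar>x - y\<bar>"
    by (metis abs_mult abs_triangle_ineq power_abs)
  also have "\<dots> \<le> Q * (real m * Q^(m-1) * \<bar>x - y\<bar>) + Q^m * \<bar>x - y\<bar>"
    using Suc assms by (intro add_mono mult_mono power_mono) auto
  also have "\<dots> = real (Suc m) * Q^(Suc m - 1) * \<bar>x - y\<bar>"
    by (cases m) (auto simp: algebra_simps)
  finally show ?case .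
qed simp

definition inv_odd_prod :: "nat \<Rightarrow> nat \<Rightarrow> real" where
  "inv_odd_prod k m = (\<Prod>i<m. 1 / (2 * real (k+i) + 1))"

definition bessel_coeff :: "nat \<Rightarrow> nat \<Rightarrow> real" where
  "bessel_coeff k m = inv_odd_prod k m * (-1/2)^m / fact m"

definition bessel_series :: "nat \<Rightarrow> real \<Rightarrow> real" where
  "bessel_series k w = (\<Sum>m. bessel_coeff k m * w^m)"

definition normalized_bessel :: "nat \<Rightarrow> real \<Rightarrow> real" where
  "normalized_bessel k z = bessel_series k (z^2)"

lemma inv_odd_prod_nonneg: "0 \<le> inv_odd_prod k m"
  unfolding inv_odd_prod_def by (auto intro!: prod_nonneg)

lemma inv_odd_prod_le_1: "inv_odd_prod k m \<le> 1"
  unfolding inv_odd_prod_def by (auto intro!: prod_le_1)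

lemma inv_odd_prod_Suc_left: "inv_odd_prod k (Suc m) = inv_odd_prod (Suc k) m / (2 * real k + 1)"
  unfolding inv_odd_prod_def prod.lessThan_Suc_shift by simp

lemma inv_odd_prod_Suc_right: "inv_odd_prod k (Suc m) = inv_odd_prod k m / (2 * real (k+m) + 1)"
  unfolding inv_odd_prod_def by simp

lemma inv_odd_prod_eq_pochhammer:
  "inv_odd_prod k m = 1 / (2^m * pochhammer (real k + 1/2) m)"
proof -
  have "inv_odd_prod k m = (\<Prod>i<m. 1 / (2 * (real k + 1/2 + real i)))"
    unfolding inv_odd_prod_def by (intro prod.cong) (auto simp: algebra_simps)
  also have "\<dots> = 1 / (\<Prod>i<m. 2 * (real k + 1/2 + real i))"
    by (simp add: prod_dividef)
  also have "(\<Prod>i<m. 2 * (real k + 1/2 + real i)) = 2^m * (\<Prod>i<m. real k + 1/2 + real i)"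
    unfolding prod.distrib by simp
  finally show ?thesis by (simp add: pochhammer_prod atLeast0LessThan)
qed

lemma abs_bessel_coeff_le: "\<bar>bessel_coeff k m * w^m\<bar> \<le> inverse (fact m) * (\<bar>w\<bar>/2)^m"
proof -
  have "\<bar>bessel_coeff k m * w^m\<bar> = inv_odd_prod k m * (\<bar>w\<bar>/2)^m / fact m"
    using inv_odd_prod_nonneg[of k m]
    by (simp add: bessel_coeff_def abs_mult power_abs power_divide)
  also have "\<dots> \<le> 1 * (\<bar>w\<bar>/2)^m / fact m"
    using inv_odd_prod_le_1[of k m] by (intro divide_right_mono mult_right_mono) auto
  finally show ?thesis by (simp add: field_simps)
qed

lemma summable_bessel_coeff: "summable (\<lambda>m. bessel_coeff k m * w^m)"
  by (rule summable_comparison_test'[OF summable_exp[of "\<bar>w\<bar>/2"]])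
     (use abs_bessel_coeff_le in auto)

lemma bessel_series_0 [simp]: "bessel_series k 0 = 1"
  unfolding bessel_series_def powser_zero by (simp add: bessel_coeff_def inv_odd_prod_def)

lemma normalized_bessel_0 [simp]: "normalized_bessel k 0 = 1"
  by (simp add: normalized_bessel_def)

lemma isCont_bessel_series: "isCont (bessel_series k) w"
  unfolding bessel_series_def[abs_def]
  by (rule isCont_powser[of _ "\<bar>w\<bar> + 1"]) (auto intro: summable_bessel_coeff)

lemma isCont_normalized_bessel: "isCont (normalized_bessel k) z"
  unfolding normalized_bessel_def[abs_def] by (rule isCont_o2[OF _ isCont_bessel_series]) simp

lemma continuous_on_normalized_bessel: "continuous_on S (normalized_bessel k)"
  using isCont_normalized_bessel by (simp add: continuous_at_imp_continuous_on)

lemma diffs_bessel_coeff: "diffs (bessel_coeff k) m = - bessel_coeff (Suc k) m / (2 * (2 * real k + 1))"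
proof -
  have "diffs (bessel_coeff k) m = (real (Suc m) / fact (Suc m)) * inv_odd_prod k (Suc m) * (-1/2)^(Suc m)"
    by (simp add: diffs_def bessel_coeff_def)
  also have "real (Suc m) / fact (Suc m) = 1 / (fact m :: real)"
    by (simp del: of_nat_Suc)
  finally show ?thesis unfolding inv_odd_prod_Suc_left bessel_coeff_def by (simp add: field_simps)
qed

lemma has_real_derivative_bessel_series:
  "(bessel_series k has_real_derivative - bessel_series (Suc k) w / (2 * (2 * real k + 1))) (at w)"
proof -
  have "((\<lambda>w. \<Sum>m. bessel_coeff k m * w^m) has_real_derivative
      (\<Sum>m. diffs (bessel_coeff k) m * w^m)) (at w)"
    by (rule termdiffs_strong_converges_everywhere) (rule summable_bessel_coeff)
  also have "(\<Sum>m. diffs (bessel_coeff k) m * w^m)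
      = (\<Sum>m. (-1 / (2 * (2 * real k + 1))) * (bessel_coeff (Suc k) m * w^m))"
    by (intro suminf_cong) (simp add: diffs_bessel_coeff)
  also have "\<dots> = - bessel_series (Suc k) w / (2 * (2 * real k + 1))"
    unfolding bessel_series_def by (subst suminf_mult[OF summable_bessel_coeff]) simp
  finally show ?thesis unfolding bessel_series_def[abs_def] .
qed

lemma has_real_derivative_normalized_bessel:
  "(normalized_bessel k has_real_derivative
     - bessel_series (Suc k) (z^2) / (2 * (2 * real k + 1)) * (2 * z)) (at z)"
  unfolding normalized_bessel_def[abs_def]
  by (rule DERIV_chain2[OF has_real_derivative_bessel_series]) (auto intro!: derivative_eq_intros)

lemma bessel_coeff_recurrence:
  "(2 * real k + 1) * (bessel_coeff k (Suc m) - bessel_coeff (Suc k) (Suc m))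
     = - bessel_coeff (Suc (Suc k)) m / (2 * real k + 3)"
proof -
  define C where "C = inv_odd_prod (Suc (Suc k)) m"
  define p where "p = ((-1/2)::real)^m"
  define f where "f = (fact m :: real)"
  have f0: "f > 0" by (simp add: f_def)
  have c: "inv_odd_prod (Suc k) (Suc m) = C / (2 * real k + 3)"
    unfolding inv_odd_prod_Suc_left C_def by (simp add: algebra_simps)
  have d: "inv_odd_prod (Suc k) m = C * (2 * real k + 2 * real m + 3) / (2 * real k + 3)"
    using c inv_odd_prod_Suc_right[of "Suc k" m] by (simp add: field_simps)
  have e1: "bessel_coeff k (Suc m) = C * (2*real k + 2*real m + 3) * (-1/2) * p
      / ((2*real k+3) * (2*real k+1) * (real m + 1) * f)"
    unfolding bessel_coeff_def inv_odd_prod_Suc_left d p_def f_def by (simp add: field_simps)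
  have e2: "bessel_coeff (Suc k) (Suc m) = C * (-1/2) * p / ((2*real k+3) * (real m + 1) * f)"
    unfolding bessel_coeff_def c p_def f_def by (simp add: field_simps)
  have e3: "bessel_coeff (Suc (Suc k)) m = C * p / f"
    unfolding bessel_coeff_def C_def p_def f_def by simp
  have key: "K * (C*(K + 2*M)*(-1/2)*p/(A*K*M*f) - C*(-1/2)*p/(A*M*f)) = - (C*p/f)/A"
    if "K > 0" "A > 0" "M > 0" "f > 0" for K A M f :: real
    using that by (simp add: field_simps)
  have "(2*real k + 1) * (bessel_coeff k (Suc m) - bessel_coeff (Suc k) (Suc m)) =
    (2*real k + 1) * (C*((2*real k + 1) + 2*(real m + 1))*(-1/2)*p/((2*real k+3)*(2*real k+1)*(real m + 1)*f)
      - C*(-1/2)*p/((2*real k+3)*(real m + 1)*f))"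
    unfolding e1 e2 by (simp add: algebra_simps)
  also have "\<dots> = - (C*p/f)/(2*real k+3)"
    by (rule key) (use f0 in auto)
  finally show ?thesis unfolding e3 .
qed

lemma bessel_series_recurrence:
  "(2 * real k + 1) * (bessel_series k w - bessel_series (Suc k) w)
     + w * bessel_series (Suc (Suc k)) w / (2 * real k + 3) = 0"
proof -
  define b where "b m = (2 * real k + 1) * (bessel_coeff k m - bessel_coeff (Suc k) m) * w^m" for m
  have "(\<lambda>m. (2 * real k + 1) * (bessel_coeff k m * w^m - bessel_coeff (Suc k) m * w^m))
      sums ((2 * real k + 1) * (bessel_series k w - bessel_series (Suc k) w))"
    unfolding bessel_series_def
    by (intro sums_mult sums_diff summable_sums summable_bessel_coeff)
  then have "b sums ((2 * real k + 1) * (bessel_series k w - bessel_series (Suc k) w))"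
    unfolding b_def by (simp add: algebra_simps)
  moreover have "b 0 = 0" by (simp add: b_def bessel_coeff_def inv_odd_prod_def)
  ultimately have "(\<lambda>m. b (Suc m)) sums ((2 * real k + 1) * (bessel_series k w - bessel_series (Suc k) w))"
    by (simp add: sums_Suc_iff)
  moreover have "b (Suc m) = - (w * (bessel_coeff (Suc (Suc k)) m * w^m) / (2 * real k + 3))" for m
  proof -
    have "b (Suc m) = ((2 * real k + 1) * (bessel_coeff k (Suc m) - bessel_coeff (Suc k) (Suc m))) * w^(Suc m)"
      by (simp add: b_def)
    then show ?thesis unfolding bessel_coeff_recurrence by (simp add: field_simps)
  qed
  moreover have "(\<lambda>m. - (w * (bessel_coeff (Suc (Suc k)) m * w^m) / (2 * real k + 3)))
      sums (- (w * bessel_series (Suc (Suc k)) w / (2 * real k + 3)))"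
    unfolding bessel_series_def
    by (intro sums_minus sums_divide sums_mult summable_sums summable_bessel_coeff)
  ultimately have "(2 * real k + 1) * (bessel_series k w - bessel_series (Suc k) w)
      = - (w * bessel_series (Suc (Suc k)) w / (2 * real k + 3))"
    using sums_unique2 by simp
  then show ?thesis by simp
qed

lemma bessel_series_tendsto_1: "(\<lambda>K. bessel_series K w) \<longlonglongrightarrow> 1"
proof -
  define b where "b m = (if m = 0 then 1 else (0::real))" for m :: nat
  have lim: "(\<lambda>K. bessel_coeff K m * w^m) \<longlonglongrightarrow> b m" for m
  proof (cases m)
    case 0 then show ?thesis by (simp add: b_def bessel_coeff_def inv_odd_prod_def)
  next
    case (Suc m')
    have bound: "\<bar>bessel_coeff K m * w^m\<bar> \<le> \<bar>w\<bar>^m * inverse (real (Suc K))" for K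
    proof -
      have "inv_odd_prod K m \<le> 1 / (2 * real K + 1)"
        unfolding Suc inv_odd_prod_Suc_left using inv_odd_prod_le_1[of "Suc K" m']
        by (simp add: divide_right_mono)
      then have "inv_odd_prod K m * (1/2)^m / fact m \<le> 1 / (2 * real K + 1) * 1 / 1"
        using inv_odd_prod_nonneg[of K m] by (intro divide_mono mult_mono power_le_one) auto
      also have "\<dots> \<le> inverse (real (Suc K))" by (simp add: field_simps)
      finally have bound: "inv_odd_prod K m * (1/2)^m / fact m \<le> inverse (real (Suc K))" .
      have "\<bar>bessel_coeff K m * w^m\<bar> = \<bar>w\<bar>^m * (inv_odd_prod K m * (1/2)^m / fact m)"
        using inv_odd_prod_nonneg[of K m] by (simp add: bessel_coeff_def abs_mult power_abs)
      also have "\<dots> \<le> \<bar>w\<bar>^m * inverse (real (Suc K))"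
        by (rule mult_left_mono[OF bound]) simp
      finally show ?thesis .
    qed
    have "eventually (\<lambda>K. norm (bessel_coeff K m * w^m) \<le> \<bar>w\<bar>^m * inverse (real (Suc K)))
        sequentially"
      using bound by (simp add: always_eventually)
    moreover have "(\<lambda>K. \<bar>w\<bar>^m * inverse (real (Suc K))) \<longlonglongrightarrow> 0"
      by (intro tendsto_mult_right_zero LIMSEQ_inverse_real_of_nat)
    ultimately have "(\<lambda>K. bessel_coeff K m * w^m) \<longlonglongrightarrow> 0"
      by (rule Lim_null_comparison)
    then show ?thesis by (simp add: b_def Suc)
  qed
  have bound: "eventually (\<lambda>(m, K). norm (bessel_coeff K m * w^m) \<le> inverse (fact m) * (\<bar>w\<bar>/2)^m)
      (at_top \<times>\<^sub>F sequentially)"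
    by (intro always_eventually) (use abs_bessel_coeff_le in auto)
  from tannerys_theorem[OF lim bound summable_exp]
  have "(\<lambda>K. \<Sum>m. bessel_coeff K m * w^m) \<longlonglongrightarrow> (\<Sum>m. b m)" by simp
  moreover have "(\<Sum>m. b m) = 1"
    using sums_single[of 0 "\<lambda>_. 1::real"] unfolding b_def by (simp add: sums_iff)
  ultimately show ?thesis unfolding bessel_series_def by simp
qed

lemma bessel_series_no_common_zero:
  assumes "w \<noteq> 0" "bessel_series k w = 0"
  shows "bessel_series (Suc k) w \<noteq> 0"
proof
  \<comment> \<open>the recurrence would propagate the common zero to every order, against the limit 1\<close>
  assume "bessel_series (Suc k) w = 0"
  have vanish: "bessel_series (k+i) w = 0 \<and> bessel_series (Suc (k+i)) w = 0" for i
  proof (induction i)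
    case 0 then show ?case using assms \<open>bessel_series (Suc k) w = 0\<close> by simp
  next
    case (Suc i)
    then have "w * bessel_series (Suc (Suc (k+i))) w / (2 * real (k+i) + 3) = 0"
      using bessel_series_recurrence[of "k+i" w] by simp
    then show ?case using Suc assms(1) by simp
  qed
  have "eventually (\<lambda>K. bessel_series K w = 0) sequentially"
    using eventually_ge_at_top[of k]
  proof eventually_elim
    case (elim K)
    then have "K = k + (K - k)" by simp
    then show ?case using vanish[of "K - k"] by metis
  qed
  then have "(\<lambda>K. bessel_series K w) \<longlonglongrightarrow> 0" by (rule tendsto_eventually)
  from LIMSEQ_unique[OF this bessel_series_tendsto_1] show False by simp
qed

lemma besselJ_series_term_eq:
  assumes "z > 0"
  shows "(-1)^m / (fact m * Gamma (real m + (real k - 1/2) + 1)) * (z/2) powr (2 * real m + (real k - 1/2))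
    = (z/2) powr (real k - 1/2) / Gamma (real k + 1/2) * (bessel_coeff k m * (z^2)^m)"
proof -
  define g where "g = real k + 1/2"
  define P where "P = (z/2) powr (real k - 1/2)"
  have g_pos: "g > 0" by (simp add: g_def)
  have Gamma_pos: "Gamma g > 0" using g_pos by (rule Gamma_real_pos)
  have "g \<notin> \<int>\<^sub>\<le>\<^sub>0" using g_pos by auto
  then have "pochhammer g m * Gamma g = Gamma (g + real m)"
    using pochhammer_Gamma[of g m] Gamma_pos by simp
  then have Gamma_eq: "Gamma (real m + (real k - 1/2) + 1) = pochhammer g m * Gamma g"
    by (simp add: g_def algebra_simps)
  have powr_eq: "(z/2) powr (2 * real m + (real k - 1/2)) = (z/2)^(2*m) * P"
    unfolding P_def using assms by (simp add: powr_add powr_realpow[symmetric] mult.commute)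
  have power_eq: "(z/2)^(2*m) = (z^2)^m / (2^m * 2^m)"
    by (simp add: power_mult power_divide power_mult_distrib[symmetric])
  have sign_eq: "((-1/2)::real)^m = (-1)^m / 2^m"
    by (metis minus_divide_left power_divide)
  have field: "S / (f * (p * G)) * (X / (T * T) * P) = P / G * (1 / (T * p) * (S / T) / f * X)"
    if "p > 0" "G > 0" "T > 0" "f > 0" for S f p G X T P :: real
    using that by (simp add: field_simps)
  show ?thesis
    unfolding Gamma_eq powr_eq bessel_coeff_def inv_odd_prod_eq_pochhammer power_eq sign_eq
      g_def[symmetric] P_def[symmetric]
    by (rule field) (use g_pos Gamma_pos in \<open>auto simp: pochhammer_pos\<close>)
qed

lemma besselJ_eq_normalized_bessel:
  assumes "z > 0"
  shows "besselJ (real k - 1/2) z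
    = (z/2) powr (real k - 1/2) / Gamma (real k + 1/2) * normalized_bessel k z"
  unfolding besselJ_def besselJ_series_term_eq[OF assms] normalized_bessel_def bessel_series_def
  by (rule suminf_mult[OF summable_bessel_coeff])

definition cheb_shift_factor :: "nat \<Rightarrow> nat \<Rightarrow> nat \<Rightarrow> real" where
  "cheb_shift_factor n k m = (\<Prod>i<m. 1 - (real (k+i))^2 / (real n)^2)"

definition rescaled_one_minus_cos :: "nat \<Rightarrow> real \<Rightarrow> real" where
  "rescaled_one_minus_cos n z = (real n)^2 * (1 - cos (z / real n))"

definition cheb_deriv_rescaled :: "nat \<Rightarrow> nat \<Rightarrow> real \<Rightarrow> real" where
  "cheb_deriv_rescaled n k z = poly (cheb_deriv n k) (cos (z / real n)) / cheb_deriv_at_one n k"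

definition cheb_deriv_rescaled_term :: "nat \<Rightarrow> nat \<Rightarrow> nat \<Rightarrow> real \<Rightarrow> real" where
  "cheb_deriv_rescaled_term n k m z =
     cheb_shift_factor n k m * inv_odd_prod k m * (- rescaled_one_minus_cos n z)^m / fact m"

lemma cheb_deriv_at_one_add:
  assumes "1 \<le> n"
  shows "cheb_deriv_at_one n (k+m)
    = cheb_deriv_at_one n k * ((real n)^2)^m * cheb_shift_factor n k m * inv_odd_prod k m"
proof (induction m)
  case 0 then show ?case by (simp add: cheb_shift_factor_def inv_odd_prod_def)
next
  case (Suc m)
  have "(real n)^2 - (real (k+m))^2 = (real n)^2 * (1 - (real (k+m))^2 / (real n)^2)"
    using assms by (simp add: field_simps)
  then have "cheb_deriv_at_one n (k + Suc m) = cheb_deriv_at_one n (k+m)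
      * ((real n)^2 * (1 - (real (k+m))^2 / (real n)^2) / (2 * real (k+m) + 1))"
    unfolding cheb_deriv_at_one_eq_prod by simp
  then show ?case
    unfolding Suc by (simp add: cheb_shift_factor_def inv_odd_prod_def mult_ac)
qed

lemma cheb_shift_factor_eq_0:
  assumes "1 \<le> n" "k \<le> n" "n < k + m"
  shows "cheb_shift_factor n k m = 0"
  unfolding cheb_shift_factor_def
  using assms by (intro prod_zero bexI[of _ "n - k"]) auto

lemma abs_cheb_shift_factor_le_1:
  assumes "1 \<le> n" "k \<le> n"
  shows "\<bar>cheb_shift_factor n k m\<bar> \<le> 1"
proof (cases "n < k + m")
  case True then show ?thesis using cheb_shift_factor_eq_0[OF assms] by simp
next
  case False
  have factor: "0 \<le> 1 - (real (k+i))^2 / (real n)^2 \<and> 1 - (real (k+i))^2 / (real n)^2 \<le> 1"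
    if "i < m" for i
  proof -
    have "(real (k+i))^2 \<le> (real n)^2" using False that by (intro power_mono) auto
    then show ?thesis using assms by (simp add: field_simps)
  qed
  have "0 \<le> cheb_shift_factor n k m" "cheb_shift_factor n k m \<le> 1"
    unfolding cheb_shift_factor_def using factor by (auto intro!: prod_nonneg prod_le_1)
  then show ?thesis by simp
qed

lemma cheb_shift_factor_tendsto_1: "(\<lambda>n. cheb_shift_factor n k m) \<longlonglongrightarrow> 1"
proof -
  have "(\<lambda>n. cheb_shift_factor n k m) \<longlonglongrightarrow> (\<Prod>i<m. 1 - (real (k+i))^2 * 0)"
    unfolding cheb_shift_factor_def divide_inverse
    by (intro tendsto_intros tendsto_inverse_0_at_top filterlim_pow_at_top filterlim_real_sequentially) auto
  then show ?thesis by simp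
qed

lemma cheb_deriv_rescaled_sums:
  assumes "1 \<le> n" "k \<le> n"
  shows "(\<lambda>m. cheb_deriv_rescaled_term n k m z) sums cheb_deriv_rescaled n k z"
proof -
  have pos: "cheb_deriv_at_one n k > 0" using cheb_deriv_at_one_pos assms by simp
  have "cheb_deriv_at_one n (k+m) / fact m * (cos (z / real n) - 1)^m / cheb_deriv_at_one n k
      = cheb_deriv_rescaled_term n k m z" for m
  proof -
    have "((real n)^2)^m * (cos (z / real n) - 1)^m = (- rescaled_one_minus_cos n z)^m"
      by (simp add: rescaled_one_minus_cos_def power_mult_distrib[symmetric] algebra_simps)
    then show ?thesis
      unfolding cheb_deriv_at_one_add[OF assms(1)] cheb_deriv_rescaled_term_def using pos
      by (simp add: field_simps)
  qed
  then have sum_eq: "cheb_deriv_rescaled n k z = (\<Sum>m<n+1. cheb_deriv_rescaled_term n k m z)"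
    unfolding cheb_deriv_rescaled_def poly_cheb_deriv_taylor sum_divide_distrib by simp
  have "cheb_deriv_rescaled_term n k m z = 0" if "m \<notin> {..<n+1}" for m
    using that cheb_shift_factor_eq_0[OF assms, of m] by (simp add: cheb_deriv_rescaled_term_def)
  then show ?thesis unfolding sum_eq by (intro sums_finite) auto
qed

lemma rescaled_one_minus_cos_approx:
  assumes "1 \<le> n"
  shows "\<bar>rescaled_one_minus_cos n z - z^2/2\<bar> \<le> z^4 / (24 * (real n)^2)"
proof -
  have n: "real n > 0" using assms by simp
  have "rescaled_one_minus_cos n z - z^2/2 = (real n)^2 * ((1 - cos (z / real n)) - (z / real n)^2 / 2)"
    using n by (simp add: rescaled_one_minus_cos_def field_simps)
  then have "\<bar>rescaled_one_minus_cos n z - z^2/2\<bar>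
      = (real n)^2 * \<bar>(1 - cos (z / real n)) - (z / real n)^2 / 2\<bar>"
    by (simp add: abs_mult)
  also have "\<dots> \<le> (real n)^2 * ((z / real n)^4 / 24)"
    using one_minus_cos_taylor[of "z / real n"] by (intro mult_left_mono) auto
  also have "\<dots> = z^4 / (24 * (real n)^2)" using n by (simp add: field_simps power_divide)
  finally show ?thesis .
qed

lemma rescaled_one_minus_cos_bounds:
  assumes "1 \<le> n" "z \<in> {0..Z}"
  defines "Q \<equiv> Z^2/2 + Z^4/24"
  shows "\<bar>rescaled_one_minus_cos n z\<bar> \<le> Q" "\<bar>z^2/2\<bar> \<le> Q"
    "\<bar>rescaled_one_minus_cos n z - z^2/2\<bar> \<le> Z^4 / (24 * (real n)^2)"
proof -
  have z: "z^2 \<le> Z^2" "z^4 \<le> Z^4" using assms(2) by (auto intro!: power_mono)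
  have n: "(real n)^2 \<ge> 1" using assms(1) by simp
  have "\<bar>rescaled_one_minus_cos n z - z^2/2\<bar> \<le> z^4 / (24 * (real n)^2)"
    by (rule rescaled_one_minus_cos_approx[OF assms(1)])
  also have "\<dots> \<le> Z^4 / (24 * (real n)^2)" using z n by (intro divide_right_mono) auto
  finally show close: "\<bar>rescaled_one_minus_cos n z - z^2/2\<bar> \<le> Z^4 / (24 * (real n)^2)" .
  have "Z^4 / (24 * (real n)^2) \<le> Z^4 / 24" using n assms(1) by (intro divide_left_mono) auto
  then have "\<bar>rescaled_one_minus_cos n z - z^2/2\<bar> \<le> Z^4 / 24" using close by linarith
  moreover have "0 \<le> z^2" "0 \<le> Z^4" by simp_all
  ultimately show "\<bar>rescaled_one_minus_cos n z\<bar> \<le> Q" "\<bar>z^2/2\<bar> \<le> Q"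
    using z unfolding Q_def abs_le_iff by linarith+
qed

lemma bessel_coeff_power_eq: "bessel_coeff k m * (z^2)^m = inv_odd_prod k m * (- (z^2/2))^m / fact m"
  by (simp add: bessel_coeff_def power_mult_distrib[symmetric])

lemma abs_inv_odd_prod_power_le:
  assumes "\<bar>x\<bar> \<le> Q"
  shows "\<bar>inv_odd_prod k m * x^m / fact m\<bar> \<le> Q^m / fact m"
proof -
  have "\<bar>inv_odd_prod k m * x^m / fact m\<bar> = inv_odd_prod k m * \<bar>x\<bar>^m / fact m"
    using inv_odd_prod_nonneg[of k m] by (simp add: abs_mult power_abs)
  also have "\<dots> \<le> 1 * Q^m / fact m"
    using inv_odd_prod_nonneg[of k m] inv_odd_prod_le_1[of k m] assms
    by (intro divide_right_mono mult_mono power_mono) auto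
  finally show ?thesis by simp
qed

lemma rescaled_term_diff_dominated:
  assumes "1 \<le> n" "k \<le> n" "\<bar>rescaled_one_minus_cos n z\<bar> \<le> Q" "\<bar>z^2/2\<bar> \<le> Q"
  shows "\<bar>cheb_deriv_rescaled_term n k m z - bessel_coeff k m * (z^2)^m\<bar> \<le> 2 * (Q^m / fact m)"
proof -
  let ?s = "rescaled_one_minus_cos n z"
  have "\<bar>cheb_deriv_rescaled_term n k m z\<bar>
      = \<bar>cheb_shift_factor n k m\<bar> * \<bar>inv_odd_prod k m * (- ?s)^m / fact m\<bar>"
    by (simp add: cheb_deriv_rescaled_term_def abs_mult)
  also have "\<dots> \<le> 1 * (Q^m / fact m)"
    using abs_cheb_shift_factor_le_1[OF assms(1,2)] abs_inv_odd_prod_power_le[of "- ?s" Q] assms(3)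
    by (intro mult_mono) auto
  finally have "\<bar>cheb_deriv_rescaled_term n k m z\<bar> \<le> Q^m / fact m" by simp
  moreover have "\<bar>bessel_coeff k m * (z^2)^m\<bar> \<le> Q^m / fact m"
    unfolding bessel_coeff_power_eq using abs_inv_odd_prod_power_le[of "- (z^2/2)" Q] assms(4) by simp
  ultimately show ?thesis by linarith
qed

lemma rescaled_term_diff_le:
  assumes "\<bar>rescaled_one_minus_cos n z\<bar> \<le> Q" "\<bar>z^2/2\<bar> \<le> Q"
  shows "\<bar>cheb_deriv_rescaled_term n k m z - bessel_coeff k m * (z^2)^m\<bar>
    \<le> \<bar>cheb_shift_factor n k m - 1\<bar> * Q^m + real m * Q^(m-1) * \<bar>rescaled_one_minus_cos n z - z^2/2\<bar>"
proof -
  let ?s = "rescaled_one_minus_cos n z"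
  define W where "W = (cheb_shift_factor n k m - 1) * (- ?s)^m + ((- ?s)^m - (- (z^2/2))^m)"
  have "cheb_deriv_rescaled_term n k m z - bessel_coeff k m * (z^2)^m = inv_odd_prod k m / fact m * W"
    unfolding bessel_coeff_power_eq W_def cheb_deriv_rescaled_term_def by (simp add: field_simps)
  then have "\<bar>cheb_deriv_rescaled_term n k m z - bessel_coeff k m * (z^2)^m\<bar>
      = inv_odd_prod k m / fact m * \<bar>W\<bar>"
    using inv_odd_prod_nonneg[of k m] by (simp add: abs_mult)
  also have "\<dots> \<le> 1 * \<bar>W\<bar>"
    using inv_odd_prod_nonneg[of k m] inv_odd_prod_le_1[of k m]
    by (intro mult_right_mono) (auto simp: divide_le_eq_1 intro: order_trans[OF _ fact_ge_1])
  also have "\<dots> \<le> \<bar>cheb_shift_factor n k m - 1\<bar> * \<bar>- ?s\<bar>^m + \<bar>(- ?s)^m - (- (z^2/2))^m\<bar>"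
    unfolding W_def by (metis abs_mult abs_triangle_ineq power_abs mult_1)
  also have "\<dots> \<le> \<bar>cheb_shift_factor n k m - 1\<bar> * Q^m + real m * Q^(m-1) * \<bar>(- ?s) - (- (z^2/2))\<bar>"
    using assms abs_power_diff_le[of "- ?s" Q "- (z^2/2)" m]
    by (intro add_mono mult_left_mono power_mono) auto
  finally show ?thesis by (simp add: abs_minus_commute)
qed

lemma eventually_sequentially_times_principal:
  "eventually (\<lambda>p. N \<le> fst p \<and> snd p \<in> A) (sequentially \<times>\<^sub>F principal A)"
  unfolding eventually_prod_filter
  by (intro exI[of _ "\<lambda>n. N \<le> n"] exI[of _ "\<lambda>z. z \<in> A"])
     (auto simp: eventually_principal intro: eventually_mono[OF eventually_ge_at_top[of N]])

lemma rescaled_term_diff_tendsto_0: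
  "((\<lambda>p. cheb_deriv_rescaled_term (fst p) k m (snd p) - bessel_coeff k m * ((snd p)^2)^m) \<longlongrightarrow> 0)
     (sequentially \<times>\<^sub>F principal {0..Z})"
proof (rule Lim_null_comparison)
  define Q where "Q = Z^2/2 + Z^4/24"
  define B where "B n = \<bar>cheb_shift_factor n k m - 1\<bar> * Q^m + real m * Q^(m-1) * (Z^4 / (24 * (real n)^2))"
    for n
  show "eventually (\<lambda>p. norm (cheb_deriv_rescaled_term (fst p) k m (snd p) - bessel_coeff k m * ((snd p)^2)^m)
      \<le> B (fst p)) (sequentially \<times>\<^sub>F principal {0..Z})"
    using eventually_sequentially_times_principal[of 1 "{0..Z}"]
  proof eventually_elim
    case (elim p)
    obtain n z where p: "p = (n, z)" by (cases p)
    have n: "1 \<le> n" and z: "z \<in> {0..Z}" using elim by (auto simp: p)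
    note bounds = rescaled_one_minus_cos_bounds[OF n z, folded Q_def]
    have "0 \<le> Q" unfolding Q_def by simp
    have "\<bar>cheb_deriv_rescaled_term n k m z - bessel_coeff k m * (z^2)^m\<bar>
        \<le> \<bar>cheb_shift_factor n k m - 1\<bar> * Q^m + real m * Q^(m-1) * \<bar>rescaled_one_minus_cos n z - z^2/2\<bar>"
      by (rule rescaled_term_diff_le[OF bounds(1,2)])
    also have "\<dots> \<le> B n"
      unfolding B_def using bounds(3) \<open>0 \<le> Q\<close> by (intro add_left_mono mult_left_mono) auto
    finally show ?case by (simp add: p)
  qed
  have "(B \<longlongrightarrow> \<bar>1 - 1\<bar> * Q^m + real m * Q^(m-1) * (Z^4 * 0)) sequentially"
    unfolding B_def divide_inverse
    by (intro tendsto_intros cheb_shift_factor_tendsto_1 tendsto_inverse_0_at_top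
        filterlim_tendsto_pos_mult_at_top filterlim_pow_at_top filterlim_real_sequentially) auto
  then show "((\<lambda>p. B (fst p)) \<longlongrightarrow> 0) (sequentially \<times>\<^sub>F principal {0..Z})"
    by (intro filterlim_compose[OF _ filterlim_fst]) simp
qed

lemma cheb_deriv_rescaled_uniform_limit:
  assumes "0 \<le> Z" "0 < \<epsilon>"
  shows "eventually (\<lambda>n. \<forall>z\<in>{0..Z}. \<bar>cheb_deriv_rescaled n k z - normalized_bessel k z\<bar> < \<epsilon>) sequentially"
proof -
  define F where "F = sequentially \<times>\<^sub>F principal {0..Z}"
  define Q where "Q = Z^2/2 + Z^4/24"
  define d where "d m p = cheb_deriv_rescaled_term (fst p) k m (snd p) - bessel_coeff k m * ((snd p)^2)^m"
    for m p
  have good: "eventually (\<lambda>p. max 1 k \<le> fst p \<and> snd p \<in> {0..Z}) F"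
    unfolding F_def by (rule eventually_sequentially_times_principal)
  have lim: "((\<lambda>p. d m p) \<longlongrightarrow> 0) F" for m
    unfolding d_def F_def by (rule rescaled_term_diff_tendsto_0)
  have "norm (d m p) \<le> 2 * (Q^m / fact m)" if "max 1 k \<le> fst p \<and> snd p \<in> {0..Z}" for m p
  proof -
    have n: "1 \<le> fst p" "k \<le> fst p" and z: "snd p \<in> {0..Z}" using that by auto
    note bounds = rescaled_one_minus_cos_bounds[OF n(1) z, folded Q_def]
    show ?thesis unfolding d_def using rescaled_term_diff_dominated[OF n bounds(1,2)] by simp
  qed
  then have bound: "eventually (\<lambda>(m, p). norm (d m p) \<le> 2 * (Q^m / fact m)) (at_top \<times>\<^sub>F F)"
    unfolding eventually_prod_filter by (intro exI[of _ "\<lambda>_. True"] exI) (use good in auto)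
  have "summable (\<lambda>m. 2 * (Q^m / fact m))"
    using summable_exp[of Q] by (simp add: divide_inverse mult.commute summable_mult)
  moreover have "F \<noteq> bot"
    unfolding F_def prod_filter_eq_bot using assms by (simp add: principal_eq_bot_iff)
  ultimately have "((\<lambda>p. \<Sum>m. d m p) \<longlongrightarrow> (\<Sum>m. 0)) F"
    using tannerys_theorem[OF lim bound] by blast
  from tendstoD[OF this assms(2)] have "eventually (\<lambda>p. \<bar>\<Sum>m. d m p\<bar> < \<epsilon>) F"
    by (simp add: dist_real_def)
  with good have "eventually (\<lambda>p. \<bar>cheb_deriv_rescaled (fst p) k (snd p) - normalized_bessel k (snd p)\<bar> < \<epsilon>) F"
  proof eventually_elim
    case (elim p)
    have "(\<lambda>m. d m p) sums (cheb_deriv_rescaled (fst p) k (snd p) - normalized_bessel k (snd p))"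
      unfolding d_def normalized_bessel_def bessel_series_def
      using elim by (intro sums_diff cheb_deriv_rescaled_sums summable_sums summable_bessel_coeff) auto
    then show ?case using elim by (simp add: sums_unique[symmetric])
  qed
  then show ?thesis
    unfolding F_def eventually_prod_filter eventually_principal by (auto elim!: eventually_mono)
qed

lemma cheb_deriv_root_near_1:
  assumes "k + 2 \<le> n"
  shows "\<exists>x. cos (real (2*k+3) * pi / (2 * real n)) \<le> x \<and> x \<le> 1 \<and> poly (cheb_deriv n (k+1)) x = 0"
proof -
  have n: "real n > 0" using assms by simp
  define \<theta> where "\<theta> i = real (2*(k+1-i)+1) * pi / (2 * real n)" for i
  define a where "a i = cos (\<theta> i)" for i
  have \<theta>_range: "0 \<le> \<theta> i \<and> \<theta> i \<le> pi" if "i \<le> k+1" for i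
  proof -
    have "real (2*(k+1-i)+1) * pi \<le> 2 * real n * pi"
      using assms that by (intro mult_right_mono) auto
    then show ?thesis unfolding \<theta>_def using n by (simp add: field_simps)
  qed
  have "\<forall>i<k+1. a i < a (Suc i)"
  proof (intro allI impI)
    fix i assume i: "i < k+1"
    then have "\<theta> (Suc i) < \<theta> i" unfolding \<theta>_def using n
      by (intro divide_strict_right_mono mult_strict_right_mono) auto
    then show "a i < a (Suc i)" unfolding a_def using \<theta>_range i by (intro cos_monotone_0_pi) auto
  qed
  moreover have "\<forall>i\<le>k+1. poly (cheb n) (a i) = 0"
  proof (intro allI impI)
    fix i
    have "real n * \<theta> i = real (2*(k+1-i)+1) * (pi / 2)" unfolding \<theta>_def using n by (simp add: field_simps)
    then show "poly (cheb n) (a i) = 0"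
      unfolding a_def poly_cheb_cos cos_zero_iff by (intro disjI1 exI[of _ "2*(k+1-i)+1"]) simp
  qed
  \<comment> \<open>the \<open>a i\<close> are the \<open>k + 2\<close> largest zeros of \<open>T_n\<close>\<close>
  ultimately obtain x where "a 0 \<le> x" "x \<le> a (k+1)" "poly ((pderiv ^^ (k+1)) (cheb n)) x = 0"
    using poly_higher_pderiv_root_between by blast
  moreover have "a 0 = cos (real (2*k+3) * pi / (2 * real n))"
    unfolding a_def \<theta>_def by (simp add: algebra_simps)
  moreover have "a (k+1) \<le> 1" unfolding a_def by simp
  ultimately show ?thesis unfolding cheb_deriv_def by auto
qed

lemma omega_is_max_root:
  assumes "k + 2 \<le> n"
  shows "poly (cheb_deriv n (k+1)) (omega n k) = 0"
    and "\<And>x. poly (cheb_deriv n (k+1)) x = 0 \<Longrightarrow> x \<le> omega n k"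
proof -
  define S where "S = {x. poly (cheb_deriv n (k+1)) x = 0}"
  have "poly (cheb_deriv n (k+1)) 1 > 0" using assms by (intro poly_cheb_deriv_pos) auto
  then have "finite S" unfolding S_def by (intro poly_roots_finite) auto
  moreover have "S \<noteq> {}" using cheb_deriv_root_near_1[OF assms] unfolding S_def by auto
  ultimately show "poly (cheb_deriv n (k+1)) (omega n k) = 0"
    "\<And>x. poly (cheb_deriv n (k+1)) x = 0 \<Longrightarrow> x \<le> omega n k"
    unfolding omega_def S_def[symmetric] using Max_in by (auto simp: S_def)
qed

lemma omega_bounds:
  assumes "k + 2 \<le> n"
  shows "cos (real (2*k+3) * pi / (2 * real n)) \<le> omega n k" "omega n k < 1"
proof -
  show "cos (real (2*k+3) * pi / (2 * real n)) \<le> omega n k"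
    using cheb_deriv_root_near_1[OF assms] omega_is_max_root(2)[OF assms] by force
  have "0 < poly (cheb_deriv n (k+1)) x" if "1 \<le> x" for x
    using assms that by (intro poly_cheb_deriv_pos) auto
  then show "omega n k < 1"
    using omega_is_max_root(1)[OF assms] by (metis less_irrefl not_le)
qed

definition rescaled_omega :: "nat \<Rightarrow> nat \<Rightarrow> real" where
  "rescaled_omega n k = real n * arccos (omega n k)"

lemma cos_rescaled_omega:
  assumes "k + 2 \<le> n"
  shows "cos (rescaled_omega n k / real n) = omega n k"
proof -
  have "-1 \<le> omega n k"
    using omega_bounds(1)[OF assms] cos_ge_minus_one order_trans by blast
  then show ?thesis
    using assms omega_bounds(2)[OF assms] by (simp add: rescaled_omega_def cos_arccos)
qed

lemma rescaled_omega_bounds: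
  assumes "k + 2 \<le> n"
  shows "0 \<le> rescaled_omega n k" "rescaled_omega n k \<le> real (2*k+3) * pi / 2"
proof -
  have n: "real n > 0" using assms by simp
  define B where "B = real (2*k+3) * pi / (2 * real n)"
  have "real (2*k+3) * pi \<le> 2 * real n * pi" using assms by (intro mult_right_mono) auto
  then have B: "0 \<le> B" "B \<le> pi" unfolding B_def using n by (simp_all add: field_simps)
  have "-1 \<le> omega n k" "omega n k \<le> 1"
    using omega_bounds[OF assms] cos_ge_minus_one[of B] unfolding B_def[symmetric] by linarith+
  then show "0 \<le> rescaled_omega n k" unfolding rescaled_omega_def by (simp add: arccos_lbound)
  have "arccos (omega n k) \<le> arccos (cos B)"
    using omega_bounds[OF assms] unfolding B_def[symmetric] by (intro arccos_le_arccos) auto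
  also have "\<dots> = B" using B by (rule arccos_cos)
  finally have "real n * arccos (omega n k) \<le> real n * B" using n by simp
  moreover have "real n * B = real (2*k+3) * pi / 2" unfolding B_def using n by (simp add: field_simps)
  ultimately show "rescaled_omega n k \<le> real (2*k+3) * pi / 2" unfolding rescaled_omega_def by simp
qed

lemma cheb_deriv_rescaled_rescaled_omega:
  assumes "k + 2 \<le> n"
  shows "cheb_deriv_rescaled n (k+1) (rescaled_omega n k) = 0"
  unfolding cheb_deriv_rescaled_def cos_rescaled_omega[OF assms] omega_is_max_root(1)[OF assms] by simp

lemma tau_eq_cheb_deriv_rescaled:
  assumes "k + 2 \<le> n"
  shows "tau n k = \<bar>cheb_deriv_rescaled n k (rescaled_omega n k)\<bar>"
proof -
  have "cheb_deriv_at_one n k > 0" using assms by (intro cheb_deriv_at_one_pos) simp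
  then show ?thesis unfolding tau_def cheb_deriv_rescaled_def cos_rescaled_omega[OF assms]
    by (simp add: cheb_deriv_at_one_def abs_divide)
qed

lemma normalized_bessel_pos_before_zero:
  assumes "\<forall>x. 0 < x \<and> x \<le> b \<longrightarrow> normalized_bessel k x \<noteq> 0" "0 \<le> y" "y \<le> b"
  shows "normalized_bessel k y > 0"
proof (rule ccontr)
  assume "\<not> normalized_bessel k y > 0"
  then obtain x where "0 \<le> x" "x \<le> y" "normalized_bessel k x = 0"
    using IVT2'[of "normalized_bessel k" y 0 0] assms(2) continuous_on_normalized_bessel by force
  moreover have "x \<noteq> 0" using \<open>normalized_bessel k x = 0\<close> by auto
  ultimately show False using assms(1,3) by auto
qed

lemma eventually_cheb_deriv_rescaled_pos:
  assumes "0 \<le> a" "\<forall>x. 0 < x \<and> x \<le> a \<longrightarrow> normalized_bessel k x \<noteq> 0"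
  shows "eventually (\<lambda>n. \<forall>z\<in>{0..a}. cheb_deriv_rescaled n k z > 0) sequentially"
proof -
  obtain x0 where x0: "x0 \<in> {0..a}" "\<forall>y\<in>{0..a}. normalized_bessel k x0 \<le> normalized_bessel k y"
    using continuous_attains_inf[of "{0..a}" "normalized_bessel k"] assms(1) continuous_on_normalized_bessel
    by auto
  have "normalized_bessel k x0 > 0" using normalized_bessel_pos_before_zero[OF assms(2)] x0(1) by auto
  from cheb_deriv_rescaled_uniform_limit[OF assms(1) this, of k] show ?thesis
    by eventually_elim (use x0(2) in force)
qed

lemma rescaled_omega_gt_if_pos:
  assumes "k + 2 \<le> n" "\<forall>z\<in>{0..a}. cheb_deriv_rescaled n (k+1) z > 0"
  shows "a < rescaled_omega n k"
  using assms cheb_deriv_rescaled_rescaled_omega[OF assms(1)] rescaled_omega_bounds(1)[OF assms(1)]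
  by (metis atLeastAtMost_iff less_irrefl not_le)

lemma rescaled_omega_le_if_neg:
  assumes "k + 2 \<le> n" "0 \<le> z" "z \<le> real n" "cheb_deriv_rescaled n (k+1) z < 0"
  shows "rescaled_omega n k \<le> z"
proof -
  have n: "real n > 0" using assms(1) by simp
  define p where "p = cheb_deriv n (k+1)"
  have "cheb_deriv_at_one n (k+1) > 0" using assms(1) by (intro cheb_deriv_at_one_pos) simp
  then have neg: "poly p (cos (z / real n)) < 0" and pos: "0 < poly p 1"
    using assms(4) unfolding cheb_deriv_rescaled_def p_def cheb_deriv_at_one_def
    by (simp_all add: divide_less_0_iff)
  then have "cos (z / real n) \<noteq> 1" by auto
  then have "cos (z / real n) < 1" using cos_le_one[of "z / real n"] by linarith
  then obtain x where x: "cos (z / real n) < x" "poly p x = 0" using poly_IVT_pos[OF _ neg pos] by blast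
  have "z / real n \<le> 1" using assms(3) n by simp
  then have "z / real n \<le> pi" using pi_gt3 by linarith
  then have "arccos (cos (z / real n)) = z / real n" using assms(2) n by (intro arccos_cos) auto
  moreover have "arccos (omega n k) \<le> arccos (cos (z / real n))"
    using x omega_is_max_root(2)[OF assms(1)] omega_bounds(2)[OF assms(1)] unfolding p_def
    by (intro arccos_le_arccos) fastforce+
  ultimately have "arccos (omega n k) \<le> z / real n" by simp
  then show ?thesis unfolding rescaled_omega_def using n by (simp add: pos_le_divide_eq mult.commute)
qed

definition is_first_pos_zero :: "(real \<Rightarrow> real) \<Rightarrow> real \<Rightarrow> bool" where
  "is_first_pos_zero f j \<longleftrightarrow> 0 < j \<and> f j = 0 \<and> (\<forall>y. 0 < y \<and> y < j \<longrightarrow> f y \<noteq> 0)"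

lemma is_first_pos_zero_unique: "is_first_pos_zero f a \<Longrightarrow> is_first_pos_zero f b \<Longrightarrow> a = b"
  unfolding is_first_pos_zero_def by (metis linorder_neqE_linordered_idom)

lemma first_pos_zero_eqI: "is_first_pos_zero (besselJ \<nu>) j \<Longrightarrow> first_pos_zero \<nu> = j"
  unfolding first_pos_zero_def is_first_pos_zero_def[symmetric]
  by (blast intro: the_equality is_first_pos_zero_unique)

lemma is_first_pos_zero_cong:
  assumes "\<And>x. 0 < x \<Longrightarrow> f x = 0 \<longleftrightarrow> g x = 0"
  shows "is_first_pos_zero f j \<longleftrightarrow> is_first_pos_zero g j"
  unfolding is_first_pos_zero_def using assms by auto

lemma normalized_bessel_has_zero:
  "\<exists>z. 0 < z \<and> z \<le> real (2*k+3) * pi / 2 \<and> normalized_bessel (k+1) z = 0"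
proof (rule ccontr)
  \<comment> \<open>otherwise the rescaled derivative of order \<open>k + 1\<close> would eventually be positive on \<open>[0, B]\<close>,
    yet it vanishes at \<open>rescaled_omega n k \<le> B\<close>\<close>
  define B where "B = real (2*k+3) * pi / 2"
  assume "\<not> ?thesis"
  then have "\<forall>x. 0 < x \<and> x \<le> B \<longrightarrow> normalized_bessel (k+1) x \<noteq> 0" unfolding B_def by auto
  then have "eventually (\<lambda>n. (\<forall>z\<in>{0..B}. cheb_deriv_rescaled n (k+1) z > 0) \<and> k + 2 \<le> n) sequentially"
    using eventually_cheb_deriv_rescaled_pos eventually_ge_at_top
    by (intro eventually_conj) (auto simp: B_def)
  then obtain n where "\<forall>z\<in>{0..B}. cheb_deriv_rescaled n (k+1) z > 0" "k + 2 \<le> n"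
    by (auto dest: eventually_happens)
  then show False using rescaled_omega_gt_if_pos rescaled_omega_bounds(2) unfolding B_def
    by (meson not_le)
qed

lemma normalized_bessel_first_zero_exists: "\<exists>j. is_first_pos_zero (normalized_bessel (k+1)) j"
proof -
  define S where "S = {0..real (2*k+3) * pi / 2} \<inter> {z. normalized_bessel (k+1) z = 0}"
  have "closed {z. normalized_bessel (k+1) z = 0}"
    by (rule closed_Collect_eq) (auto intro: continuous_on_normalized_bessel)
  then have "compact S" unfolding S_def by (intro compact_Int_closed compact_Icc)
  moreover obtain z where "0 < z" "z \<le> real (2*k+3) * pi / 2" "normalized_bessel (k+1) z = 0"
    using normalized_bessel_has_zero by blast
  then have "z \<in> S" by (simp add: S_def)
  then have "S \<noteq> {}" by blast
  ultimately obtain j where j: "j \<in> S" "\<forall>y\<in>S. j \<le> y"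
    using continuous_attains_inf[of S "\<lambda>x. x"] by (auto intro: continuous_on_id)
  then have "0 < j" unfolding S_def by (cases "j = 0") auto
  moreover have "normalized_bessel (k+1) y \<noteq> 0" if "0 < y" "y < j" for y
  proof
    assume "normalized_bessel (k+1) y = 0"
    then have "y \<in> S" using that j(1) unfolding S_def by auto
    then show False using j(2) that by force
  qed
  ultimately have "is_first_pos_zero (normalized_bessel (k+1)) j"
    using j(1) unfolding is_first_pos_zero_def S_def by blast
  then show ?thesis ..
qed

lemma normalized_bessel_sign_change:
  assumes j: "is_first_pos_zero (normalized_bessel (k+1)) j" and "0 < \<delta>"
  shows "\<exists>z. j < z \<and> z < j + \<delta> \<and> normalized_bessel (k+1) z < 0"
proof (rule ccontr)
  assume "\<not> ?thesis"
  then have right: "normalized_bessel (k+1) z \<ge> 0" if "j < z" "z < j + \<delta>" for z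
    using that by force
  have j_pos: "0 < j" and j_zero: "normalized_bessel (k+1) j = 0"
    and before: "\<forall>y. 0 < y \<and> y < j \<longrightarrow> normalized_bessel (k+1) y \<noteq> 0"
    using j by (auto simp: is_first_pos_zero_def)
  have "normalized_bessel (k+1) j \<le> normalized_bessel (k+1) y" if "\<bar>j - y\<bar> < min \<delta> j" for y
  proof (cases "y < j")
    case True
    then have "normalized_bessel (k+1) y > 0"
      using that normalized_bessel_pos_before_zero[of y "k+1" y] before by auto
    then show ?thesis using j_zero by simp
  next
    case False
    then show ?thesis using that right[of y] j_zero by (cases "y = j") auto
  qed
  \<comment> \<open>so \<open>j\<close> is a local minimum and the derivative vanishes there\<close>
  then have "- bessel_series (Suc (k+1)) (j^2) / (2 * (2 * real (k+1) + 1)) * (2 * j) = 0"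
    using DERIV_local_min[OF has_real_derivative_normalized_bessel, of "min \<delta> j"] j_pos \<open>0 < \<delta>\<close>
    by auto
  then have "bessel_series (Suc (k+1)) (j^2) = 0" using j_pos by (simp add: add_pos_pos)
  moreover have "bessel_series (k+1) (j^2) = 0" using j_zero by (simp add: normalized_bessel_def)
  ultimately show False using bessel_series_no_common_zero[of "j^2" "k+1"] j_pos by simp
qed

lemma rescaled_omega_tendsto:
  assumes j: "is_first_pos_zero (normalized_bessel (k+1)) j"
  shows "(\<lambda>n. rescaled_omega n k) \<longlonglongrightarrow> j"
proof (rule order_tendstoI)
  fix a assume "a < j"
  show "eventually (\<lambda>n. a < rescaled_omega n k) sequentially"
  proof (cases "a < 0")
    case True
    show ?thesis using eventually_ge_at_top[of "k+2"]
      by eventually_elim (use rescaled_omega_bounds(1) True in force)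
  next
    case False
    have "\<forall>x. 0 < x \<and> x \<le> a \<longrightarrow> normalized_bessel (k+1) x \<noteq> 0"
      using j \<open>a < j\<close> by (auto simp: is_first_pos_zero_def)
    with False have "eventually (\<lambda>n. (\<forall>z\<in>{0..a}. cheb_deriv_rescaled n (k+1) z > 0) \<and> k + 2 \<le> n)
        sequentially"
      by (intro eventually_conj eventually_cheb_deriv_rescaled_pos eventually_ge_at_top) auto
    then show ?thesis by eventually_elim (auto intro: rescaled_omega_gt_if_pos)
  qed
next
  fix a assume "j < a"
  then obtain z where z: "j < z" "z < a" "normalized_bessel (k+1) z < 0"
    using normalized_bessel_sign_change[OF j, of "a - j"] by auto
  have "0 \<le> z" using z j by (auto simp: is_first_pos_zero_def)
  have "eventually (\<lambda>n. (\<forall>y\<in>{0..z}. \<bar>cheb_deriv_rescaled n (k+1) y - normalized_bessel (k+1) y\<bar>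
      < - normalized_bessel (k+1) z) \<and> k + 2 \<le> n \<and> nat \<lceil>z\<rceil> \<le> n) sequentially"
    using z(3) by (intro eventually_conj cheb_deriv_rescaled_uniform_limit \<open>0 \<le> z\<close> eventually_ge_at_top) auto
  then show "eventually (\<lambda>n. rescaled_omega n k < a) sequentially"
  proof eventually_elim
    case (elim n)
    then have "cheb_deriv_rescaled n (k+1) z < 0" "z \<le> real n" using \<open>0 \<le> z\<close> by force+
    then show ?case
      using rescaled_omega_le_if_neg[of k n z] elim \<open>0 \<le> z\<close> z(2) by simp
  qed
qed

lemma tau_tendsto_normalized_bessel:
  assumes j: "is_first_pos_zero (normalized_bessel (k+1)) j"
  shows "(\<lambda>n. tau n k) \<longlonglongrightarrow> \<bar>normalized_bessel k j\<bar>"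
proof -
  let ?z = "\<lambda>n. rescaled_omega n k"
  define B where "B = real (2*k+3) * pi / 2"
  have "(\<lambda>n. cheb_deriv_rescaled n k (?z n) - normalized_bessel k (?z n)) \<longlonglongrightarrow> 0"
  proof (rule tendstoI)
    fix \<epsilon> :: real assume "0 < \<epsilon>"
    have "eventually (\<lambda>n. (\<forall>z\<in>{0..B}. \<bar>cheb_deriv_rescaled n k z - normalized_bessel k z\<bar> < \<epsilon>)
        \<and> k + 2 \<le> n) sequentially"
      using \<open>0 < \<epsilon>\<close> by (intro eventually_conj cheb_deriv_rescaled_uniform_limit eventually_ge_at_top)
         (auto simp: B_def)
    then show "eventually (\<lambda>n. dist (cheb_deriv_rescaled n k (?z n) - normalized_bessel k (?z n)) 0 < \<epsilon>)
        sequentially"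
      by eventually_elim (use rescaled_omega_bounds in \<open>auto simp: dist_real_def B_def\<close>)
  qed
  moreover have "(\<lambda>n. normalized_bessel k (?z n)) \<longlonglongrightarrow> normalized_bessel k j"
    by (rule isCont_tendsto_compose[OF isCont_normalized_bessel rescaled_omega_tendsto[OF j]])
  ultimately have "(\<lambda>n. (cheb_deriv_rescaled n k (?z n) - normalized_bessel k (?z n))
      + normalized_bessel k (?z n)) \<longlonglongrightarrow> 0 + normalized_bessel k j"
    by (rule tendsto_add)
  then have "(\<lambda>n. \<bar>cheb_deriv_rescaled n k (?z n)\<bar>) \<longlonglongrightarrow> \<bar>normalized_bessel k j\<bar>"
    by (intro tendsto_rabs) simp
  moreover have "eventually (\<lambda>n. \<bar>cheb_deriv_rescaled n k (?z n)\<bar> = tau n k) sequentially"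
    using eventually_ge_at_top[of "k+2"] by eventually_elim (simp add: tau_eq_cheb_deriv_rescaled)
  ultimately show ?thesis by (rule Lim_transform_eventually)
qed

lemma besselJ_eq_0_iff:
  assumes "0 < z"
  shows "besselJ (real k - 1/2) z = 0 \<longleftrightarrow> normalized_bessel k z = 0"
proof -
  have "Gamma (real k + 1/2) > 0" by (intro Gamma_real_pos) simp
  then have "Gamma (real k + 1/2) \<noteq> 0" by linarith
  then show ?thesis using assms by (simp add: besselJ_eq_normalized_bessel)
qed

lemma Gamma_mult_besselJ_eq_normalized_bessel:
  assumes "0 < z"
  shows "Gamma (real k - 1/2 + 1) * (z/2) powr (- (real k - 1/2)) * \<bar>besselJ (real k - 1/2) z\<bar>
    = \<bar>normalized_bessel k z\<bar>"
proof -
  define P where "P = (z/2) powr (real k - 1/2)"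
  define G where "G = Gamma (real k + 1/2)"
  have "G > 0" unfolding G_def by (intro Gamma_real_pos) simp
  moreover have "P > 0" unfolding P_def using assms by simp
  moreover have "(z/2) powr (- (real k - 1/2)) * P = 1"
    unfolding P_def using assms by (simp add: powr_add[symmetric])
  moreover have "Gamma (real k - 1/2 + 1) = G" unfolding G_def by (simp add: algebra_simps)
  ultimately show ?thesis
    unfolding besselJ_eq_normalized_bessel[OF assms] P_def[symmetric] G_def[symmetric]
    by (simp add: abs_mult field_simps)
qed

theorem lemma6p1:
  fixes k :: nat
  assumes "k \<ge> 1"
  shows "(\<lambda>n. tau n k) \<longlonglongrightarrow>
           (let \<nu> = real k - 1 / 2 in
              Gamma (\<nu> + 1) * (first_pos_zero (\<nu> + 1) / 2) powr (- \<nu>)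
              * \<bar>besselJ \<nu> (first_pos_zero (\<nu> + 1))\<bar>)"
proof -
  obtain j where j: "is_first_pos_zero (normalized_bessel (k+1)) j"
    using normalized_bessel_first_zero_exists by blast
  have "is_first_pos_zero (besselJ (real (k+1) - 1/2)) j"
    using j is_first_pos_zero_cong besselJ_eq_0_iff by blast
  then have zero: "first_pos_zero (real k - 1/2 + 1) = j"
    by (intro first_pos_zero_eqI) (simp add: algebra_simps)
  have "0 < j" using j by (simp add: is_first_pos_zero_def)
  show ?thesis
    unfolding Let_def zero Gamma_mult_besselJ_eq_normalized_bessel[OF \<open>0 < j\<close>]
    by (rule tau_tendsto_normalized_bessel[OF j])
qed

end
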